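(* Let $n$ be odd, $k$ a positive integer with $\gcd(k,n)=1$, and $q=2^k$. For every $c\in\mathbb{F}_{2^n}$, the system $$\operatorname{Tr}\!\left(\frac{1}{v^{1/(q-1)}}\right)=1,\qquad (v+1)^{q+1}+cv=0$$ has at most one solution $v\in\mathbb{F}_{2^n}$.
   Context: $\operatorname{Tr}(x)=x+x^2+\cdots+x^{2^{n-1}}$ is the absolute trace from $\mathbb{F}_{2^n}$ to $\mathbb{F}_2$. Since $\gcd(q-1,2^n-1)=1$, the map $w\mapsto w^{q-1}$ is a bijection of $\mathbb{F}_{2^n}$, and $v^{1/(q-1)}$ denotes the unique $w\in\mathbb{F}_{2^n}$ with $w^{q-1}=v$. (A solution necessarily has $v\neq 0$, since $v=0$ does not satisfy the second equation.) *)

theory Defs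
  imports Main
begin

text \<open>Absolute trace from GF(2^n) to GF(2), valued in the field itself
  (its values are 0 or 1).\<close>
definition abs_trace :: "nat \<Rightarrow> 'a::field \<Rightarrow> 'a" where
  "abs_trace n x = (\<Sum>i<n. x ^ (2 ^ i))"

text \<open>v^(1/(q-1)) with q = 2^k: the unique w with w^(q-1) = v
  (unique since w |-> w^(q-1) is a bijection under the standing assumptions).\<close>
definition root_qm1 :: "nat \<Rightarrow> 'a::field \<Rightarrow> 'a" where
  "root_qm1 k v = (THE w. w ^ (2 ^ k - 1) = v)"

end

theory Submission
  imports Defs "HOL-Computational_Algebra.Primes"
begin

text \<open>Let \<open>q = 2^k\<close>. If \<open>v\<^sub>1 \<noteq> v\<^sub>2\<close> both satisfy \<open>(v + 1)^(q+1) + c v = 0\<close> and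
  \<open>x = 1 / v\<^sub>1^(1/(q-1))\<close>, so that \<open>x = v\<^sub>1 x^q\<close>, then \<open>s = x (v\<^sub>2 + 1) / (v\<^sub>1 + v\<^sub>2)\<close>
  satisfies \<open>s^q + s = x^q\<close>. Since the trace is additive and invariant under Frobenius,
  \<open>Tr x = Tr (x^q) = Tr (s^q) + Tr s = 0\<close>, so \<open>v\<^sub>1\<close> violates the trace condition.\<close>

lemma power_card_minus_one_eq_one:
  fixes x :: "'a::{field,finite}"
  assumes "x \<noteq> 0"
  shows "x ^ (card (UNIV :: 'a set) - 1) = 1"
proof -
  let ?U = "UNIV - {0 :: 'a}"
  have card_U: "card ?U = card (UNIV :: 'a set) - 1"
    by (simp add: card_Diff_singleton)
  have "bij_betw ((*) x) ?U ?U"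
    by (rule bij_betw_byWitness[of _ "\<lambda>y. y / x"]) (use assms in auto)
  then have "(\<Prod>y\<in>?U. x * y) = \<Prod>?U"
    by (rule prod.reindex_bij_betw)
  moreover have "(\<Prod>y\<in>?U. x * y) = x ^ (card (UNIV :: 'a set) - 1) * \<Prod>?U"
    by (simp add: prod.distrib card_U)
  moreover have "\<Prod>?U \<noteq> 0"
    by simp
  ultimately show ?thesis
    by simp
qed

lemma power_card_eq_self:
  fixes x :: "'a::{field,finite}"
  shows "x ^ card (UNIV :: 'a set) = x"
proof (cases "x = 0")
  case False
  have "card (UNIV :: 'a set) = Suc (card (UNIV :: 'a set) - 1)"
    using finite_UNIV_card_ge_0[where ?'a = 'a] by simp
  then show ?thesis
    by (metis False power_Suc power_card_minus_one_eq_one mult.right_neutral)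
qed (use finite_UNIV_card_ge_0[where ?'a = 'a] in simp)

lemma CHAR_eq_2_if_card_power_of_2:
  assumes "card (UNIV :: 'a::{field,finite} set) = 2 ^ n"
  shows "CHAR('a) = 2"
proof -
  have "n \<noteq> 0"
  proof
    assume "n = 0"
    then have "card (UNIV :: 'a set) = 1" using assms by simp
    then show False
      by (metis card_1_singletonE singletonD UNIV_I zero_neq_one)
  qed
  have "(-1 :: 'a) = (-1) ^ card (UNIV :: 'a set)"
    by (simp only: power_card_eq_self)
  also have "\<dots> = 1"
    using \<open>n \<noteq> 0\<close> assms by (simp add: neg_one_even_power)
  finally have "1 + 1 = (0 :: 'a)"
    by (metis eq_neg_iff_add_eq_0)
  then have "of_nat 2 = (0 :: 'a)"
    by simp
  then have "CHAR('a) dvd 2"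
    by (simp only: of_nat_eq_0_iff_char_dvd)
  then show ?thesis
    using CHAR_not_1' prime_nat_iff[of 2] by auto
qed

lemma power_power_fixed:
  fixes x :: "'a::monoid_mult"
  assumes "x ^ m = x"
  shows "x ^ (m ^ a) = x"
proof (induction a)
  case (Suc a)
  then show ?case
    by (simp add: power_mult assms)
qed simp

lemma power_two_power_fixed_coprime:
  fixes r :: "'a::monoid_mult"
  assumes "r ^ 2 ^ k = r" "r ^ 2 ^ n = r" "coprime k n" "k > 0"
  shows "r ^ 2 = r"
proof -
  obtain a b where ab: "k * a = n * b + 1"
    using bezout_nat[of k n] assms(3,4) by auto
  have "r = r ^ ((2 ^ k) ^ a)"
    using power_power_fixed[OF assms(1)] by simp
  also have "(2 ^ k) ^ a = (2 ^ n) ^ b * (2 :: nat)"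
    by (simp add: ab power_mult[symmetric])
  also have "r ^ ((2 ^ n) ^ b * 2) = (r ^ ((2 ^ n) ^ b)) ^ 2"
    by (rule power_mult)
  also have "\<dots> = r ^ 2"
    using power_power_fixed[OF assms(2)] by simp
  finally show ?thesis ..
qed

lemma power_two_power_minus_one_inj:
  assumes "card (UNIV :: 'a::{field,finite} set) = 2 ^ n" "coprime k n" "k > 0"
  shows "inj (\<lambda>w :: 'a. w ^ (2 ^ k - 1))"
proof (rule injI)
  fix w1 w2 :: 'a
  assume eq: "w1 ^ (2 ^ k - 1) = w2 ^ (2 ^ k - 1)"
  obtain m where m: "2 ^ k = Suc m" "m > 0"
  proof
    show "2 ^ k = Suc (2 ^ k - 1)" by simp
    show "2 ^ k - 1 > (0::nat)" using assms(3) one_less_power[of "2::nat" k] by simp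
  qed
  show "w1 = w2"
  proof (cases "w2 = 0")
    case True
    then show ?thesis
      using eq m by (simp add: power_0_left)
  next
    case False
    define r where "r = w1 / w2"
    have r_unit: "r ^ m = 1"
      using eq False m by (simp add: r_def power_divide)
    then have "r ^ 2 ^ k = r"
      by (simp add: m)
    moreover have "r ^ 2 ^ n = r"
      using power_card_eq_self[of r] unfolding assms(1) .
    ultimately have "r ^ 2 = r"
      using assms(2,3) by (rule power_two_power_fixed_coprime)
    moreover have "r \<noteq> 0"
      using r_unit m by (auto simp: power_0_left)
    ultimately have "r = 1"
      by (simp add: power2_eq_square)
    then show ?thesis
      using False by (simp add: r_def)
  qed
qed

lemma power_root_qm1:
  assumes "card (UNIV :: 'a::{field,finite} set) = 2 ^ n" "coprime k n" "k > 0"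
  shows "root_qm1 k (v :: 'a) ^ (2 ^ k - 1) = v"
proof -
  have "inj (\<lambda>w :: 'a. w ^ (2 ^ k - 1))"
    by (rule power_two_power_minus_one_inj[OF assms])
  then have "bij (\<lambda>w :: 'a. w ^ (2 ^ k - 1))"
    by (simp add: bij_def finite_UNIV_inj_surj)
  then have "\<exists>!w. w ^ (2 ^ k - 1) = v"
    by (simp add: bij_iff)
  then show ?thesis
    unfolding root_qm1_def by (rule theI')
qed

lemma one_div_eq_mult_power_one_div:
  fixes w v :: "'a::field"
  assumes "w ^ (m - 1) = v" "m > 0"
  shows "1 / w = v * (1 / w) ^ m"
proof (cases "w = 0")
  case False
  have "w ^ m = w ^ (m - 1) * w"
    by (rule power_minus_mult[OF assms(2), symmetric])
  moreover have "v \<noteq> 0"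
    using False assms(1) by auto
  ultimately show ?thesis
    using False assms(1) by (simp add: power_one_over)
qed (use assms(2) in simp)

lemma abs_trace_add:
  fixes a b :: "'a::field"
  assumes "CHAR('a) = 2"
  shows "abs_trace n (a + b) = abs_trace n a + abs_trace n b"
proof -
  have "(a + b) ^ 2 ^ i = a ^ 2 ^ i + b ^ 2 ^ i" for i
    by (rule freshmans_dream') (simp_all add: assms)
  then show ?thesis
    unfolding abs_trace_def by (simp add: sum.distrib)
qed

lemma abs_trace_power_two:
  fixes x :: "'a::field"
  assumes "x ^ 2 ^ n = x"
  shows "abs_trace n (x ^ 2) = abs_trace n x"
proof -
  have "abs_trace n (x ^ 2) + x ^ 2 ^ 0 = (\<Sum>i<n. x ^ 2 ^ Suc i) + x ^ 2 ^ 0"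
    unfolding abs_trace_def by (simp add: power_mult[symmetric] mult.commute)
  also have "\<dots> = (\<Sum>i<Suc n. x ^ 2 ^ i)"
    by (simp only: sum.lessThan_Suc_shift add.commute)
  also have "\<dots> = abs_trace n x + x ^ 2 ^ 0"
    unfolding abs_trace_def using assms by simp
  finally show ?thesis
    by simp
qed

lemma abs_trace_power_two_power:
  fixes x :: "'a::field"
  assumes "x ^ 2 ^ n = x"
  shows "abs_trace n (x ^ 2 ^ j) = abs_trace n x"
proof (induction j)
  case (Suc j)
  have "(x ^ 2 ^ j) ^ 2 ^ n = x ^ 2 ^ j"
    by (metis assms power_mult mult.commute)
  then have "abs_trace n ((x ^ 2 ^ j) ^ 2) = abs_trace n (x ^ 2 ^ j)"
    by (rule abs_trace_power_two)
  then show ?case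
    using Suc by (simp add: power_mult[symmetric] mult.commute)
qed simp

lemma abs_trace_power_two_power_add_self:
  fixes s :: "'a::field"
  assumes "CHAR('a) = 2" "s ^ 2 ^ n = s"
  shows "abs_trace n (s ^ 2 ^ j + s) = 0"
proof -
  have "abs_trace n (s ^ 2 ^ j + s) = abs_trace n s + abs_trace n s"
    using assms by (simp add: abs_trace_add abs_trace_power_two_power)
  also have "\<dots> = 0"
    by (metis assms(1) uminus_CHAR_2 add.right_inverse)
  finally show ?thesis .
qed

text \<open>With \<open>a\<^sub>i = (v\<^sub>i + 1)^q\<close>, the hypotheses say that \<open>v\<^sub>1, v\<^sub>2\<close> are roots of
  \<open>(v + 1)^(q+1) + c v\<close>, and \<open>a\<^sub>1 + a\<^sub>2 = (v\<^sub>1 + v\<^sub>2)^q\<close> in characteristic 2.\<close>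

lemma two_roots_identity:
  fixes a\<^sub>1 a\<^sub>2 c v\<^sub>1 v\<^sub>2 :: "'a::comm_ring_1"
  assumes "CHAR('a) = 2"
    and "a\<^sub>1 * (v\<^sub>1 + 1) + c * v\<^sub>1 = 0" "a\<^sub>2 * (v\<^sub>2 + 1) + c * v\<^sub>2 = 0"
  shows "a\<^sub>2 * (v\<^sub>1 + v\<^sub>2) + v\<^sub>1 * (v\<^sub>2 + 1) * (a\<^sub>1 + a\<^sub>2) = (v\<^sub>1 + v\<^sub>2) * (a\<^sub>1 + a\<^sub>2)"
proof -
  have two: "(2 :: 'a) = 0"
    using of_nat_CHAR[where ?'a = 'a] assms(1) by simp
  have "a\<^sub>2 * (v\<^sub>1 + v\<^sub>2) + v\<^sub>1 * (v\<^sub>2 + 1) * (a\<^sub>1 + a\<^sub>2) - (v\<^sub>1 + v\<^sub>2) * (a\<^sub>1 + a\<^sub>2)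
      = v\<^sub>2 * (a\<^sub>1 * (v\<^sub>1 + 1) + c * v\<^sub>1) + v\<^sub>1 * (a\<^sub>2 * (v\<^sub>2 + 1) + c * v\<^sub>2)
        - 2 * (v\<^sub>2 * a\<^sub>1 + c * v\<^sub>1 * v\<^sub>2)"
    by (simp add: algebra_simps)
  also have "\<dots> = 0"
    using assms(2,3) two by simp
  finally show ?thesis
    by simp
qed

lemma artin_schreier_witness:
  fixes v\<^sub>1 v\<^sub>2 c x :: "'a::field"
  assumes "CHAR('a) = 2" "v\<^sub>1 \<noteq> v\<^sub>2"
    and "(v\<^sub>1 + 1) ^ (2 ^ k + 1) + c * v\<^sub>1 = 0" "(v\<^sub>2 + 1) ^ (2 ^ k + 1) + c * v\<^sub>2 = 0"
    and "x = v\<^sub>1 * x ^ 2 ^ k"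
  defines "s \<equiv> x * (v\<^sub>2 + 1) / (v\<^sub>1 + v\<^sub>2)"
  shows "s ^ 2 ^ k + s = x ^ 2 ^ k"
proof -
  define q :: nat where "q = 2 ^ k"
  define A where "A = v\<^sub>1 + v\<^sub>2"
  have frobenius: "(a + b) ^ q = a ^ q + b ^ q" for a b :: 'a
    unfolding q_def by (rule freshmans_dream') (simp_all add: assms(1))
  have "A = v\<^sub>1 - v\<^sub>2"
    unfolding A_def by (rule minus_CHAR_2[OF assms(1), symmetric])
  then have "A \<noteq> 0"
    using assms(2) by simp
  have two: "(2 :: 'a) = 0"
    using of_nat_CHAR[where ?'a = 'a] assms(1) by simp
  have A_q: "A ^ q = (v\<^sub>1 + 1) ^ q + (v\<^sub>2 + 1) ^ q"
    using two by (simp add: A_def frobenius algebra_simps)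
  have "(v\<^sub>1 + 1) ^ q * (v\<^sub>1 + 1) + c * v\<^sub>1 = 0" "(v\<^sub>2 + 1) ^ q * (v\<^sub>2 + 1) + c * v\<^sub>2 = 0"
    using assms(3,4) by (simp_all add: q_def power_add mult.commute)
  then have key: "(v\<^sub>2 + 1) ^ q * A + v\<^sub>1 * (v\<^sub>2 + 1) * A ^ q = A * A ^ q"
    unfolding A_q unfolding A_def by (rule two_roots_identity[OF assms(1)])
  have s_q: "s ^ q = x ^ q * (v\<^sub>2 + 1) ^ q / A ^ q"
    by (simp add: s_def A_def power_divide power_mult_distrib)
  have s_eq: "s = v\<^sub>1 * x ^ q * (v\<^sub>2 + 1) / A"
    unfolding s_def A_def q_def by (subst assms(5)) (rule refl)
  have "s ^ q + s = x ^ q * (v\<^sub>2 + 1) ^ q / A ^ q + v\<^sub>1 * x ^ q * (v\<^sub>2 + 1) / A"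
    unfolding s_q unfolding s_eq ..
  also have "\<dots> = x ^ q * ((v\<^sub>2 + 1) ^ q * A + v\<^sub>1 * (v\<^sub>2 + 1) * A ^ q) / (A * A ^ q)"
    using \<open>A \<noteq> 0\<close> by (simp add: field_simps)
  also have "\<dots> = x ^ q"
    using \<open>A \<noteq> 0\<close> by (simp add: key)
  finally have "s ^ q + s = x ^ q" .
  then show ?thesis
    by (simp add: q_def)
qed

lemma abs_trace_one_div_root_qm1_eq_0:
  fixes v\<^sub>1 v\<^sub>2 c :: "'a::{field,finite}"
  assumes "card (UNIV :: 'a set) = 2 ^ n" "coprime k n" "k > 0" "v\<^sub>1 \<noteq> v\<^sub>2"
    and "(v\<^sub>1 + 1) ^ (2 ^ k + 1) + c * v\<^sub>1 = 0" "(v\<^sub>2 + 1) ^ (2 ^ k + 1) + c * v\<^sub>2 = 0"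
  shows "abs_trace n (1 / root_qm1 k v\<^sub>1) = 0"
proof -
  define x where "x = 1 / root_qm1 k v\<^sub>1"
  define s where "s = x * (v\<^sub>2 + 1) / (v\<^sub>1 + v\<^sub>2)"
  have char: "CHAR('a) = 2"
    by (rule CHAR_eq_2_if_card_power_of_2[OF assms(1)])
  have fixed: "y ^ 2 ^ n = y" for y :: 'a
    using power_card_eq_self[of y] unfolding assms(1) .
  have "x = v\<^sub>1 * x ^ 2 ^ k"
    unfolding x_def by (rule one_div_eq_mult_power_one_div[OF power_root_qm1[OF assms(1-3)]]) simp
  then have "s ^ 2 ^ k + s = x ^ 2 ^ k"
    unfolding s_def using artin_schreier_witness[OF char assms(4-6)] by blast
  then have "abs_trace n x = abs_trace n (s ^ 2 ^ k + s)"
    using abs_trace_power_two_power[OF fixed] by metis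
  also have "\<dots> = 0"
    by (rule abs_trace_power_two_power_add_self[OF char fixed])
  finally show ?thesis
    unfolding x_def .
qed

theorem mainTheorem2:
  fixes n k :: nat and c :: "'a::{field,finite}"
  assumes "card (UNIV :: 'a set) = 2 ^ n"
    and "odd n"
    and "k > 0"
    and "coprime k n"
  shows "card {v :: 'a. abs_trace n (1 / root_qm1 k v) = 1
                 \<and> (v + 1) ^ (2 ^ k + 1) + c * v = 0} \<le> 1"
proof -
  have "v\<^sub>1 = v\<^sub>2"
    if "abs_trace n (1 / root_qm1 k v\<^sub>1) = 1" "(v\<^sub>1 + 1) ^ (2 ^ k + 1) + c * v\<^sub>1 = 0"
      and "(v\<^sub>2 + 1) ^ (2 ^ k + 1) + c * v\<^sub>2 = 0" for v\<^sub>1 v\<^sub>2 :: 'a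
    using abs_trace_one_div_root_qm1_eq_0[OF assms(1,4,3) _ that(2,3)] that(1) by force
  then show ?thesis
    by (auto simp: card_le_Suc0_iff_eq)
qed

end
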